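(* Let the radius distribution $f$ belong to $\mathrm{RV}_{-1}$. Then there exists $a^*>0$ such that $$\lim_{n\to\infty}\mathbb{P}(T_nf(n)\le a^* )=1.$$
   Context: Covering process: $R$ takes values in $\{1,2,\dots\}$, $f(r)=\mathbb{P}(R\ge r)$ for real $r\ge1$. On $\mathbb{Z}/n\mathbb{Z}$, let $(R_k)$ be i.i.d. copies of $R$, $(U_k)$ i.i.d. uniform on $\mathbb{Z}/n\mathbb{Z}$, independent; $\mathcal{O}_k=\{U_k,\dots,U_k+R_k-1\}$ (mod $n$), $C_0=\emptyset$, $C_k=C_{k-1}\cup\mathcal{O}_k$; with an independent rate-one Poisson process $N(t)$, $X_t=C_{N(t)}$ and $T_n=\inf\{t:X_t=\mathbb{Z}/n\mathbb{Z}\}$. $U\in\mathrm{RV}_p$ means $\lim_{x\to\infty}U(xt)/U(x)=t^p$ for all $t>0$. *)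

theory Defs
  imports "HOL-Probability.Probability"
begin

text \<open>Arc \<open>O = {u, u+1, ..., u+r-1}\<close> in Z/nZ, with Z/nZ represented by \<open>{0..<n}\<close>.\<close>
definition arc :: "nat \<Rightarrow> nat \<Rightarrow> nat \<Rightarrow> nat set" where
  "arc n u r = {(u + j) mod n | j. j < r}"

text \<open>Law of the covered set \<open>C_k\<close>: \<open>C_0 = {}\<close>, \<open>C_k = C_(k-1) \<union> O_k\<close>, where
  \<open>O_k\<close> is the arc started at an independent uniform point \<open>U_k\<close> of Z/nZ with an
  independent length \<open>R_k\<close> distributed as \<open>R\<close>.\<close>
fun cover_pmf :: "nat pmf \<Rightarrow> nat \<Rightarrow> nat \<Rightarrow> nat set pmf" where
  "cover_pmf R n 0 = return_pmf {}"
| "cover_pmf R n (Suc k) =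
     bind_pmf (cover_pmf R n k) (\<lambda>C.
     bind_pmf (pmf_of_set {..<n}) (\<lambda>u.
     bind_pmf R (\<lambda>r. return_pmf (C \<union> arc n u r))))"

text \<open>Law of \<open>X_t = C_(N(t))\<close>, with \<open>N\<close> an independent rate-one Poisson process
  (so \<open>N(t)\<close> is Poisson(t), and \<open>N(0) = 0\<close>).\<close>
definition X_pmf :: "nat pmf \<Rightarrow> nat \<Rightarrow> real \<Rightarrow> nat set pmf" where
  "X_pmf R n t = (if t = 0 then cover_pmf R n 0
                  else bind_pmf (poisson_pmf t) (cover_pmf R n))"

text \<open>\<open>P(T_n \<le> t)\<close> for \<open>t \<ge> 0\<close>. Since \<open>X_t\<close> is nondecreasing and right-continuous
  (piecewise constant) in \<open>t\<close>, \<open>T_n \<le> t\<close> iff \<open>X_t = Z/nZ\<close>.\<close>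
definition cover_time_le :: "nat pmf \<Rightarrow> nat \<Rightarrow> real \<Rightarrow> real" where
  "cover_time_le R n t = measure_pmf.prob (X_pmf R n t) {{..<n}}"

definition radius_tail :: "nat pmf \<Rightarrow> real \<Rightarrow> real" where
  "radius_tail R r = measure_pmf.prob R {k. real k \<ge> r}"

definition regularly_varying :: "real \<Rightarrow> (real \<Rightarrow> real) \<Rightarrow> bool" where
  "regularly_varying p U \<longleftrightarrow>
     (\<forall>t>0. ((\<lambda>x. U (x * t) / U x) \<longlongrightarrow> t powr p) at_top)"

end

theory Submission
  imports Defs "HOL-Real_Asymp.Real_Asymp"
begin

(* A point z is a gap of C if z is uncovered and z + 1 is covered; a set C \<noteq> Z/nZ is either
   empty or has a gap. An arc misses a fixed point with probability 1 - q, where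
   q = E min(R, n) / n, and creates at most one new gap, at the predecessor of its start
   point. Following the expected number of gaps through k arcs and Poissonizing gives
   P(T_n > t) \<le> exp(-t p) + t p exp(-t q) with p = P(R \<ge> 1). Shrinking radii only delays
   coverage, so R may be replaced by its truncation at n / 2^M (smaller radii become 0):
   then p = f(n / 2^M) and q \<ge> \<Sum>i<M. f(n / 2^(i+1)) / 2^(i+2). For f in RV_{-1} and
   t = 4 / f(n) the bound tends to exp(-4 2^M) + 4 2^M exp(-2M) as n \<rightarrow> \<infinity>, which is
   arbitrarily small for large M. *)

lemma arc_subset_lessThan: "0 < n \<Longrightarrow> arc n u r \<subseteq> {..<n}"
  by (auto simp: arc_def)

lemma arc_mono: "r' \<le> r \<Longrightarrow> arc n u r' \<subseteq> arc n u r"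
  by (auto simp: arc_def)

lemma arc_eq_empty_iff: "0 < n \<Longrightarrow> arc n u r = {} \<longleftrightarrow> r = 0"
  by (auto simp: arc_def)

definition arc_offset :: "nat \<Rightarrow> nat \<Rightarrow> nat \<Rightarrow> nat" where
  "arc_offset n u z = (if u \<le> z then z - u else z + n - u)"

lemma arc_offset_less: "z < n \<Longrightarrow> arc_offset n u z < n"
  by (auto simp: arc_offset_def)

lemma arc_offset_involution: "u < n \<Longrightarrow> z < n \<Longrightarrow> arc_offset n (arc_offset n u z) z = u"
  by (auto simp: arc_offset_def)

lemma add_arc_offset_mod: "u < n \<Longrightarrow> z < n \<Longrightarrow> (u + arc_offset n u z) mod n = z"
  by (auto simp: arc_offset_def)

lemma mem_arc_iff:
  assumes "u < n" "z < n"
  shows "z \<in> arc n u r \<longleftrightarrow> arc_offset n u z < r"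
proof
  assume "z \<in> arc n u r"
  then obtain j where j: "j < r" "z = (u + j) mod n" by (auto simp: arc_def)
  then have "(u + j) mod n = (u + arc_offset n u z) mod n"
    using add_arc_offset_mod assms by simp
  then have "j mod n = arc_offset n u z mod n"
    using nat_mod_eq_iff by auto
  then have "j mod n = arc_offset n u z"
    using arc_offset_less[OF assms(2)] by simp
  then show "arc_offset n u z < r" using j by (metis mod_less_eq_dividend order.strict_trans1)
next
  assume "arc_offset n u z < r"
  with add_arc_offset_mod[OF assms] show "z \<in> arc n u r" by (force simp: arc_def)
qed

lemma card_arcs_containing:
  assumes "z < n"
  shows "card {u \<in> {..<n}. z \<in> arc n u r} = min r n"
proof -
  have "{u \<in> {..<n}. z \<in> arc n u r} = (\<lambda>d. arc_offset n d z) ` {..<min r n}"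
  proof (intro equalityI subsetI)
    fix u assume "u \<in> {u \<in> {..<n}. z \<in> arc n u r}"
    with assms show "u \<in> (\<lambda>d. arc_offset n d z) ` {..<min r n}"
      by (intro image_eqI[of _ _ "arc_offset n u z"])
         (auto simp: mem_arc_iff arc_offset_involution arc_offset_less)
  next
    fix u assume "u \<in> (\<lambda>d. arc_offset n d z) ` {..<min r n}"
    with assms show "u \<in> {u \<in> {..<n}. z \<in> arc n u r}"
      by (auto simp: mem_arc_iff arc_offset_involution arc_offset_less)
  qed
  moreover have "inj_on (\<lambda>d. arc_offset n d z) {..<min r n}"
    by (rule inj_on_inverseI[where g = "\<lambda>u. arc_offset n u z"])
       (use assms in \<open>auto simp: arc_offset_involution\<close>)
  ultimately show ?thesis by (simp add: card_image)
qed

lemma card_arcs_avoiding: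
  assumes "z < n"
  shows "card {u \<in> {..<n}. z \<notin> arc n u r} = n - min r n"
proof -
  have "{u \<in> {..<n}. z \<notin> arc n u r} = {..<n} - {u \<in> {..<n}. z \<in> arc n u r}" by auto
  also have "card \<dots> = card {..<n} - card {u \<in> {..<n}. z \<in> arc n u r}"
    by (rule card_Diff_subset) auto
  finally show ?thesis using card_arcs_containing[OF assms] by simp
qed

section \<open>Gaps\<close>

definition gaps :: "nat \<Rightarrow> nat set \<Rightarrow> nat set" where
  "gaps n C = {z \<in> {..<n}. z \<notin> C \<and> Suc z mod n \<in> C}"

lemma finite_gaps [simp]: "finite (gaps n C)"
  by (simp add: gaps_def)

lemma gaps_nonempty:
  assumes "C \<subseteq> {..<n}" "C \<noteq> {}" "C \<noteq> {..<n}"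
  shows "gaps n C \<noteq> {}"
proof
  assume no_gaps: "gaps n C = {}"
  obtain x where x: "x < n" "x \<notin> C" using assms by auto
  obtain y where y: "y \<in> C" using assms by auto
  have "(x + d) mod n \<notin> C" for d
  proof (induction d)
    case 0 then show ?case using x by simp
  next
    case (Suc d)
    have "(x + d) mod n < n" using x by simp
    then have "Suc ((x + d) mod n) mod n \<notin> C"
      using Suc no_gaps unfolding gaps_def by blast
    then show ?case by (simp add: mod_Suc_eq)
  qed
  from this[of "y + n - x"] show False using x y assms(1) by auto
qed

definition pred_mod :: "nat \<Rightarrow> nat \<Rightarrow> nat" where
  "pred_mod n u = (if u = 0 then n - 1 else u - 1)"

lemma bij_betw_pred_mod: "0 < n \<Longrightarrow> bij_betw (pred_mod n) {..<n} {..<n}"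
  by (rule bij_betw_byWitness[where f' = "\<lambda>z. Suc z mod n"])
     (auto simp: pred_mod_def mod_Suc)

lemma gaps_Un_arc_subset:
  assumes "u < n"
  shows "gaps n (C \<union> arc n u r) \<subseteq>
    {z \<in> gaps n C. z \<notin> arc n u r} \<union> {z. z = pred_mod n u \<and> z \<notin> C \<and> 0 < r}"
proof
  fix z assume z: "z \<in> gaps n (C \<union> arc n u r)"
  then have zn: "z < n" "z \<notin> C" "z \<notin> arc n u r" "Suc z mod n \<in> C \<union> arc n u r"
    by (auto simp: gaps_def)
  show "z \<in> {z \<in> gaps n C. z \<notin> arc n u r} \<union> {z. z = pred_mod n u \<and> z \<notin> C \<and> 0 < r}"
  proof (cases "Suc z mod n \<in> C")
    case True then show ?thesis using zn by (auto simp: gaps_def)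
  next
    case False
    then have "Suc z mod n \<in> arc n u r" using zn by auto
    moreover have "Suc z mod n < n" using zn by simp
    ultimately have off: "arc_offset n u (Suc z mod n) < r"
      using mem_arc_iff[OF assms] by blast
    have "arc_offset n u (Suc z mod n) = 0"
    proof (rule ccontr)
      assume "arc_offset n u (Suc z mod n) \<noteq> 0"
      then have "arc_offset n u z < arc_offset n u (Suc z mod n)"
        using zn assms by (auto simp: arc_offset_def mod_Suc split: if_splits)
      then show False using off zn mem_arc_iff[OF assms zn(1)] by auto
    qed
    then have "z = pred_mod n u"
      using zn assms by (auto simp: arc_offset_def pred_mod_def mod_Suc split: if_splits)
    then show ?thesis using zn off by auto
  qed
qed

lemma card_gaps_Un_arc_le:
  assumes "u < n"
  shows "card (gaps n (C \<union> arc n u r)) \<le>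
         card {z \<in> gaps n C. z \<notin> arc n u r} + of_bool (0 < r \<and> pred_mod n u \<notin> C)"
proof -
  have "card (gaps n (C \<union> arc n u r)) \<le>
        card {z \<in> gaps n C. z \<notin> arc n u r} + card {z. z = pred_mod n u \<and> z \<notin> C \<and> 0 < r}"
    by (rule order.trans[OF card_mono card_Un_le]) (use gaps_Un_arc_subset[OF assms] in auto)
  also have "card {z. z = pred_mod n u \<and> z \<notin> C \<and> 0 < r} = of_bool (0 < r \<and> pred_mod n u \<notin> C)"
    by (simp add: Collect_conv_if)
  finally show ?thesis .
qed

lemma sum_card_gaps_Un_arc_le:
  assumes "0 < n"
  shows "(\<Sum>u<n. card (gaps n (C \<union> arc n u r))) \<le>
         card (gaps n C) * (n - min r n) + of_bool (0 < r) * card ({..<n} - C)"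
proof -
  have "(\<Sum>u<n. card (gaps n (C \<union> arc n u r))) \<le>
        (\<Sum>u<n. card {z \<in> gaps n C. z \<notin> arc n u r}) + (\<Sum>u<n. of_bool (0 < r \<and> pred_mod n u \<notin> C))"
    unfolding sum.distrib[symmetric] by (rule sum_mono) (simp add: card_gaps_Un_arc_le)
  also have "(\<Sum>u<n. card {z \<in> gaps n C. z \<notin> arc n u r}) = (n - min r n) * card (gaps n C)"
    by (rule sum_multicount) (use card_arcs_avoiding in \<open>auto simp: gaps_def\<close>)
  also have "(\<Sum>u<n. of_bool (0 < r \<and> pred_mod n u \<notin> C)) =
             of_bool (0 < r) * card {u \<in> {..<n}. pred_mod n u \<notin> C}"
    by (auto simp: sum.inter_filter[symmetric] intro!: arg_cong[where f = card])
  also have "card {u \<in> {..<n}. pred_mod n u \<notin> C} = card ({..<n} - C)"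
  proof -
    have "bij_betw (pred_mod n) {u \<in> {..<n}. pred_mod n u \<notin> C} ({..<n} - C)"
      using bij_betw_pred_mod[OF assms] unfolding bij_betw_def inj_on_def by auto
    then show ?thesis by (rule bij_betw_same_card)
  qed
  finally show ?thesis by (simp add: mult.commute)
qed

lemma sum_card_diff_Un_arc:
  "(\<Sum>u<n. card ({..<n} - (C \<union> arc n u r))) = card ({..<n} - C) * (n - min r n)"
proof -
  have "(\<Sum>u<n. card ({..<n} - (C \<union> arc n u r))) = (\<Sum>u<n. card {z \<in> {..<n} - C. z \<notin> arc n u r})"
    by (intro sum.cong arg_cong[where f = card]) auto
  also have "\<dots> = (n - min r n) * card ({..<n} - C)"
    by (rule sum_multicount) (use card_arcs_avoiding in auto)
  finally show ?thesis by (simp add: mult.commute)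
qed

section \<open>The gap potential\<close>

lemma integrable_measure_pmf_bounded:
  fixes f :: "'a \<Rightarrow> real"
  assumes "\<And>x. \<bar>f x\<bar> \<le> B"
  shows "integrable (measure_pmf Q) f"
  by (rule measure_pmf.integrable_const_bound[where B = B]) (use assms in auto)

lemma integrable_of_bool_pmf [simp]: "integrable (measure_pmf Q) (\<lambda>x. of_bool (P x) :: real)"
  by (rule integrable_measure_pmf_bounded[where B = 1]) simp

lemma integrable_pmf_pmf [simp]: "integrable (measure_pmf Q) (\<lambda>x. pmf (M x) y)"
  by (rule integrable_measure_pmf_bounded[where B = 1]) (simp add: pmf_le_1)

definition covered_fraction :: "nat \<Rightarrow> nat \<Rightarrow> real" where
  "covered_fraction n r = real (min r n) / real n"

definition nonempty_arc_prob :: "nat pmf \<Rightarrow> real" where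
  "nonempty_arc_prob Q = measure_pmf.prob Q {r. 0 < r}"

definition mean_covered_fraction :: "nat pmf \<Rightarrow> nat \<Rightarrow> real" where
  "mean_covered_fraction Q n = measure_pmf.expectation Q (covered_fraction n)"

lemma covered_fraction_bounds: "0 \<le> covered_fraction n r" "covered_fraction n r \<le> 1"
  by (auto simp: covered_fraction_def divide_le_eq_1)

lemma integrable_covered_fraction [simp]: "integrable (measure_pmf Q) (covered_fraction n)"
  by (rule integrable_measure_pmf_bounded[where B = 1]) (simp add: covered_fraction_bounds)

lemma expectation_of_bool_pmf:
  "measure_pmf.expectation Q (\<lambda>x. of_bool (P x) :: real) = measure_pmf.prob Q {x. P x}"
proof -
  have "(\<lambda>x. of_bool (P x) :: real) = indicator {x. P x}" by (auto simp: indicator_def)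
  then show ?thesis by simp
qed

lemma mean_covered_fraction_bounds: "0 \<le> mean_covered_fraction Q n" "mean_covered_fraction Q n \<le> 1"
proof -
  show "0 \<le> mean_covered_fraction Q n"
    unfolding mean_covered_fraction_def by (simp add: covered_fraction_bounds)
  have "mean_covered_fraction Q n \<le> measure_pmf.expectation Q (\<lambda>_. 1)"
    unfolding mean_covered_fraction_def by (rule integral_mono) (auto simp: covered_fraction_bounds)
  then show "mean_covered_fraction Q n \<le> 1" by simp
qed

text \<open>Weights: \<open>a\<close> for emptiness, \<open>b\<close> per gap, and \<open>c\<close> per uncovered point, which pays for
  the gaps that later arcs may create there.\<close>
definition gap_potential :: "nat \<Rightarrow> real \<Rightarrow> real \<Rightarrow> real \<Rightarrow> nat set \<Rightarrow> real" where
  "gap_potential n a b c C = a * of_bool (C = {}) + b * card (gaps n C) + c * card ({..<n} - C)"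

lemma not_full_le_gap_potential:
  assumes "C \<subseteq> {..<n}"
  shows "1 - of_bool (C = {..<n}) \<le> gap_potential n 1 1 0 C"
proof (cases "C = {} \<or> C = {..<n}")
  case False
  then have "0 < card (gaps n C)" using gaps_nonempty[OF assms] by (simp add: card_gt_0_iff)
  then show ?thesis using False by (simp add: gap_potential_def)
qed (auto simp: gap_potential_def)

lemma sum_gap_potential_Un_arc_le:
  fixes r :: nat
  assumes n: "0 < n" and "0 \<le> b" "0 \<le> c"
  defines "I \<equiv> of_bool (0 < r)" and "S \<equiv> covered_fraction n r"
  shows "(\<Sum>u<n. gap_potential n a b c (C \<union> arc n u r)) \<le>
    n * gap_potential n (a * (1 - I)) (b * (1 - S)) (b * I / n + c * (1 - S)) C"
proof -
  have n_minus: "real (n - min r n) = n * (1 - S)"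
    using n by (simp add: S_def covered_fraction_def of_nat_diff field_simps)
  have empty: "(\<Sum>u<n. of_bool (C \<union> arc n u r = {})) = n * (of_bool (C = {}) * (1 - I) :: real)"
    using arc_eq_empty_iff[OF n] by (simp add: I_def)
  have "(\<Sum>u<n. real (card (gaps n (C \<union> arc n u r)))) \<le>
        card (gaps n C) * real (n - min r n) + I * card ({..<n} - C)"
  proof -
    have "real (\<Sum>u<n. card (gaps n (C \<union> arc n u r))) \<le>
          real (card (gaps n C) * (n - min r n) + of_bool (0 < r) * card ({..<n} - C))"
      using sum_card_gaps_Un_arc_le[OF n, of C r] by (simp only: of_nat_le_iff)
    then show ?thesis by (simp add: I_def)
  qed
  then have gaps: "b * (\<Sum>u<n. real (card (gaps n (C \<union> arc n u r)))) \<le>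
        b * (card (gaps n C) * real (n - min r n) + I * card ({..<n} - C))"
    by (rule mult_left_mono) fact
  have diff: "(\<Sum>u<n. real (card ({..<n} - (C \<union> arc n u r)))) = card ({..<n} - C) * real (n - min r n)"
    unfolding of_nat_sum[symmetric] sum_card_diff_Un_arc by simp
  have "(\<Sum>u<n. gap_potential n a b c (C \<union> arc n u r)) =
        a * (\<Sum>u<n. of_bool (C \<union> arc n u r = {})) + b * (\<Sum>u<n. real (card (gaps n (C \<union> arc n u r))))
        + c * (\<Sum>u<n. real (card ({..<n} - (C \<union> arc n u r))))"
    by (simp add: gap_potential_def sum.distrib sum_distrib_left)
  also have "\<dots> \<le> n * gap_potential n (a * (1 - I)) (b * (1 - S)) (b * I / n + c * (1 - S)) C"
    using gaps n unfolding empty diff n_minus gap_potential_def by (simp add: algebra_simps)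
  finally show ?thesis .
qed

lemma expectation_gap_potential:
  assumes "integrable (measure_pmf Q) \<alpha>" "integrable (measure_pmf Q) \<beta>" "integrable (measure_pmf Q) \<gamma>"
  shows "measure_pmf.expectation Q (\<lambda>r. gap_potential n (\<alpha> r) (\<beta> r) (\<gamma> r) C) =
    gap_potential n (measure_pmf.expectation Q \<alpha>) (measure_pmf.expectation Q \<beta>) (measure_pmf.expectation Q \<gamma>) C"
  using assms by (simp add: gap_potential_def)

fun cover_from :: "nat pmf \<Rightarrow> nat \<Rightarrow> nat set \<Rightarrow> nat \<Rightarrow> nat set pmf" where
  "cover_from Q n C 0 = return_pmf C"
| "cover_from Q n C (Suc k) = bind_pmf (cover_from Q n C k) (\<lambda>D.
     bind_pmf (pmf_of_set {..<n}) (\<lambda>u. bind_pmf Q (\<lambda>r. return_pmf (D \<union> arc n u r))))"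

lemma cover_pmf_eq_cover_from: "cover_pmf Q n k = cover_from Q n {} k"
  by (induction k) simp_all

lemma cover_from_Suc_first_step: "cover_from Q n C (Suc k) =
   bind_pmf (pmf_of_set {..<n}) (\<lambda>u. bind_pmf Q (\<lambda>r. cover_from Q n (C \<union> arc n u r) k))"
proof (induction k arbitrary: C)
  case 0 then show ?case by (simp add: bind_return_pmf)
next
  case (Suc k)
  show ?case by (subst cover_from.simps(2), subst Suc) (simp add: bind_assoc_pmf)
qed

lemma pmf_cover_from_Suc:
  assumes n: "0 < n"
  shows "pmf (cover_from Q n C (Suc k)) F =
     measure_pmf.expectation Q (\<lambda>r. (\<Sum>u<n. pmf (cover_from Q n (C \<union> arc n u r) k) F) / n)"
proof -
  have "pmf (cover_from Q n C (Suc k)) F =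
     (\<Sum>u<n. measure_pmf.expectation Q (\<lambda>r. pmf (cover_from Q n (C \<union> arc n u r) k) F)) / n"
    unfolding cover_from_Suc_first_step pmf_bind using n by (subst integral_pmf_of_set) auto
  also have "\<dots> = measure_pmf.expectation Q (\<lambda>r. (\<Sum>u<n. pmf (cover_from Q n (C \<union> arc n u r) k) F) / n)"
    by (subst Bochner_Integration.integral_sum[symmetric]) simp_all
  finally show ?thesis .
qed

text \<open>One arc multiplies the weight of emptiness by \<open>1 - p\<close> and that of a gap by \<open>1 - q\<close>, and
  moves weight \<open>b p / n\<close> onto every uncovered point (the new gap at the predecessor of a
  uniform start point); the coefficients below solve this linear recursion.\<close>
theorem not_covered_le_gap_potential:
  fixes Q :: "nat pmf"
  assumes n: "0 < n" and C: "C \<subseteq> {..<n}"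
  defines "p \<equiv> nonempty_arc_prob Q" and "q \<equiv> mean_covered_fraction Q n"
  shows "1 - pmf (cover_from Q n C k) {..<n} \<le>
    gap_potential n ((1 - p) ^ k) ((1 - q) ^ k) (k * (1 - q) ^ (k - 1) * p / n) C"
  using C
proof (induction k arbitrary: C)
  case 0
  then show ?case using not_full_le_gap_potential[of C n] by (simp add: indicator_def)
next
  case (Suc k)
  define a where "a = (1 - p) ^ k"
  define b where "b = (1 - q) ^ k"
  define c where "c = k * (1 - q) ^ (k - 1) * p / n"
  define I where "I = (\<lambda>r::nat. of_bool (0 < r) :: real)"
  define \<Psi> where "\<Psi> = (\<lambda>r. gap_potential n (a * (1 - I r)) (b * (1 - covered_fraction n r))
                             (b * I r / n + c * (1 - covered_fraction n r)) C)"
  have p01: "0 \<le> p" "p \<le> 1" by (simp_all add: p_def nonempty_arc_prob_def)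
  have "0 \<le> q" "q \<le> 1" using mean_covered_fraction_bounds by (simp_all add: q_def)
  then have bc: "0 \<le> b" "0 \<le> c" using p01 by (simp_all add: b_def c_def)
  have step: "(\<Sum>u<n. 1 - pmf (cover_from Q n (C \<union> arc n u r) k) {..<n}) / n \<le> \<Psi> r" for r
  proof -
    have "(\<Sum>u<n. 1 - pmf (cover_from Q n (C \<union> arc n u r) k) {..<n}) \<le>
          (\<Sum>u<n. gap_potential n a b c (C \<union> arc n u r))"
      unfolding a_def b_def c_def
      by (intro sum_mono Suc.IH) (use Suc.prems arc_subset_lessThan[OF n] in auto)
    also have "\<dots> \<le> n * \<Psi> r"
      unfolding \<Psi>_def I_def by (rule sum_gap_potential_Un_arc_le[OF n bc])
    finally show ?thesis using n by (simp add: divide_le_eq mult.commute)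
  qed
  have integrable_\<Psi>: "integrable (measure_pmf Q) \<Psi>"
    unfolding \<Psi>_def gap_potential_def I_def by simp
  have "1 - pmf (cover_from Q n C (Suc k)) {..<n} =
        measure_pmf.expectation Q (\<lambda>r. (\<Sum>u<n. 1 - pmf (cover_from Q n (C \<union> arc n u r) k) {..<n}) / n)"
    unfolding pmf_cover_from_Suc[OF n] using n
    by (simp add: sum_subtractf diff_divide_distrib)
  also have "\<dots> \<le> measure_pmf.expectation Q \<Psi>"
    by (rule integral_mono[OF _ integrable_\<Psi> step]) simp
  also have "\<dots> = gap_potential n (a * (1 - p)) (b * (1 - q)) (b * p / n + c * (1 - q)) C"
    unfolding \<Psi>_def I_def
    by (subst expectation_gap_potential)
       (simp_all add: expectation_of_bool_pmf nonempty_arc_prob_def p_def q_def mean_covered_fraction_def)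
  also have "b * p / n + c * (1 - q) = Suc k * (1 - q) ^ k * p / n"
    using n by (cases k) (simp_all add: b_def c_def field_simps)
  finally show ?case by (simp add: a_def b_def mult.commute)
qed

lemma pmf_cover_from_full_mono:
  assumes h: "\<And>r. h r \<le> r" and n: "0 < n" and "C \<subseteq> D" "D \<subseteq> {..<n}"
  shows "pmf (cover_from (map_pmf h Q) n C k) {..<n} \<le> pmf (cover_from Q n D k) {..<n}"
  using assms(3,4)
proof (induction k arbitrary: C D)
  case 0
  then show ?case by (auto simp: indicator_def)
next
  case (Suc k)
  have "(\<Sum>u<n. pmf (cover_from (map_pmf h Q) n (C \<union> arc n u (h r)) k) {..<n}) / n
     \<le> (\<Sum>u<n. pmf (cover_from Q n (D \<union> arc n u r) k) {..<n}) / n" for r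
  proof (intro divide_right_mono sum_mono Suc.IH)
    fix u
    show "C \<union> arc n u (h r) \<subseteq> D \<union> arc n u r" using Suc.prems arc_mono[OF h] by blast
    show "D \<union> arc n u r \<subseteq> {..<n}" using Suc.prems arc_subset_lessThan[OF n] by blast
  qed simp
  then show ?case
    unfolding pmf_cover_from_Suc[OF n] integral_map_pmf
    by (intro integral_mono) simp_all
qed

section \<open>Poissonization\<close>

lemma expectation_nat_pmf_sums:
  fixes g :: "nat \<Rightarrow> real"
  assumes "\<And>k. \<bar>g k\<bar> \<le> B"
  shows "(\<lambda>k. pmf P k * g k) sums measure_pmf.expectation P g"
proof -
  have "integrable (count_space UNIV) (\<lambda>k. pmf P k * g k)"
    using integrable_measure_pmf_bounded[OF assms, of P]
    unfolding measure_pmf_eq_density by (subst (asm) integrable_density) auto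
  moreover have "measure_pmf.expectation P g = integral\<^sup>L (count_space UNIV) (\<lambda>k. pmf P k * g k)"
    unfolding measure_pmf_eq_density by (subst integral_density) auto
  ultimately show ?thesis by (simp add: sums_integral_count_space_nat)
qed

lemma poisson_pmf_power_sums:
  fixes x :: real
  assumes "0 < t"
  shows "(\<lambda>k. pmf (poisson_pmf t) k * x ^ k) sums exp (- t * (1 - x))"
proof -
  have "(\<lambda>k. exp (- t) * ((t * x) ^ k /\<^sub>R fact k)) sums (exp (- t) * exp (t * x))"
    by (intro sums_mult exp_converges)
  moreover have "exp (- t) * exp (t * x) = exp (- t * (1 - x))"
    by (simp add: mult_exp_exp algebra_simps)
  ultimately show ?thesis
    using assms by (simp add: power_mult_distrib field_simps)
qed

lemma poisson_pmf_derivative_power_sums: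
  fixes y :: real
  assumes "0 < t"
  shows "(\<lambda>k. pmf (poisson_pmf t) k * (k * y ^ (k - 1))) sums (t * exp (- t * (1 - y)))"
proof -
  have "(\<lambda>k. t * exp (- t) * ((t * y) ^ k /\<^sub>R fact k)) sums (t * exp (- t) * exp (t * y))"
    by (intro sums_mult exp_converges)
  moreover have "t * exp (- t) * exp (t * y) = t * exp (- t * (1 - y))"
    by (simp add: mult_exp_exp algebra_simps)
  moreover have "(\<lambda>k. t * exp (- t) * ((t * y) ^ k /\<^sub>R fact k)) =
      (\<lambda>k. pmf (poisson_pmf t) (Suc k) * (Suc k * y ^ (Suc k - 1)))"
  proof
    fix k
    have "fact (Suc k) = real (Suc k) * fact k" by simp
    then show "t * exp (- t) * ((t * y) ^ k /\<^sub>R fact k) =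
        pmf (poisson_pmf t) (Suc k) * (Suc k * y ^ (Suc k - 1))"
      using assms by (simp add: power_mult_distrib field_simps del: of_nat_Suc fact_Suc)
  qed
  ultimately have "(\<lambda>k. pmf (poisson_pmf t) (Suc k) * (Suc k * y ^ (Suc k - 1))) sums (t * exp (- t * (1 - y)))"
    by simp
  then show ?thesis by (subst (asm) sums_Suc_iff) simp
qed

lemma cover_time_le_eq_expectation:
  "0 < t \<Longrightarrow> cover_time_le R n t =
     measure_pmf.expectation (poisson_pmf t) (\<lambda>k. pmf (cover_pmf R n k) {..<n})"
  by (simp add: cover_time_le_def X_pmf_def measure_pmf_single pmf_bind)

theorem cover_time_tail_le:
  fixes R :: "nat pmf"
  assumes n: "0 < n" and t: "0 < t" and h: "\<And>r. h r \<le> r"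
  defines "p \<equiv> nonempty_arc_prob (map_pmf h R)" and "q \<equiv> mean_covered_fraction (map_pmf h R) n"
  shows "1 - cover_time_le R n t \<le> exp (- t * p) + t * p * exp (- t * q)"
proof -
  define P where "P = poisson_pmf t"
  define G where "G = (\<lambda>k. pmf (cover_pmf R n k) {..<n})"
  have "1 - G k \<le> 1 - pmf (cover_from (map_pmf h R) n {} k) {..<n}" for k
    unfolding G_def cover_pmf_eq_cover_from using pmf_cover_from_full_mono[OF h n] by simp
  also have "\<dots> k \<le> (1 - p) ^ k + p * (k * (1 - q) ^ (k - 1))" for k
    using not_covered_le_gap_potential[OF n, of "{}" "map_pmf h R" k] n
    by (simp add: p_def q_def gap_potential_def gaps_def mult_ac)
  finally have pointwise: "pmf P k * (1 - G k) \<le> pmf P k * (1 - p) ^ k + p * (pmf P k * (k * (1 - q) ^ (k - 1)))" for k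
    by (metis distrib_left mult.left_commute mult_left_mono pmf_nonneg)
  have lhs: "(\<lambda>k. pmf P k * (1 - G k)) sums measure_pmf.expectation P (\<lambda>k. 1 - G k)"
    by (rule expectation_nat_pmf_sums[where B = 1]) (simp add: G_def pmf_le_1)
  have rhs: "(\<lambda>k. pmf P k * (1 - p) ^ k + p * (pmf P k * (k * (1 - q) ^ (k - 1))))
      sums (exp (- t * p) + p * (t * exp (- t * q)))"
    using poisson_pmf_power_sums[OF t, of "1 - p"] poisson_pmf_derivative_power_sums[OF t, of "1 - q"]
    unfolding P_def by (intro sums_add sums_mult) simp_all
  have "measure_pmf.expectation P (\<lambda>k. 1 - G k) \<le> exp (- t * p) + p * (t * exp (- t * q))"
    by (rule sums_le[OF pointwise lhs rhs])
  then show ?thesis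
    using t by (simp add: cover_time_le_eq_expectation P_def G_def mult_ac)
qed

section \<open>Truncated radii\<close>

definition truncate_below :: "real \<Rightarrow> nat \<Rightarrow> nat" where
  "truncate_below x r = (if x \<le> real r then r else 0)"

lemma truncate_below_le: "truncate_below x r \<le> r"
  by (simp add: truncate_below_def)

lemma nonempty_arc_prob_truncate_below:
  assumes "0 < x"
  shows "nonempty_arc_prob (map_pmf (truncate_below x) R) = radius_tail R x"
proof -
  have "truncate_below x -` {r. 0 < r} = {k. x \<le> real k}"
    using assms by (auto simp: truncate_below_def)
  then show ?thesis by (simp add: nonempty_arc_prob_def radius_tail_def measure_map_pmf)
qed

lemma dyadic_sum_le_min:
  fixes x r :: real
  assumes "0 \<le> x" "0 \<le> r"
  shows "(\<Sum>i<M. x / 2 ^ (i + 2) * of_bool (x / 2 ^ (i + 1) \<le> r)) \<le> min r (x / 2)"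
  using assms(1)
proof (induction M arbitrary: x)
  case 0 then show ?case using assms by simp
next
  case (Suc M)
  have "(\<Sum>i<Suc M. x / 2 ^ (i + 2) * of_bool (x / 2 ^ (i + 1) \<le> r)) =
        x / 4 * of_bool (x / 2 \<le> r) + (\<Sum>i<M. (x / 2) / 2 ^ (i + 2) * of_bool ((x / 2) / 2 ^ (i + 1) \<le> r))"
    by (subst sum.lessThan_Suc_shift) (simp add: field_simps)
  also have "\<dots> \<le> x / 4 * of_bool (x / 2 \<le> r) + min r (x / 4)"
    using Suc.IH[of "x / 2"] Suc.prems by simp
  also have "\<dots> \<le> min r (x / 2)" using Suc.prems assms by auto
  finally show ?case .
qed

lemma dyadic_sum_le_covered_fraction:
  assumes n: "0 < n"
  shows "(\<Sum>i<M. of_bool (n / 2 ^ (i + 1) \<le> real r) / 2 ^ (i + 2)) \<le>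
         covered_fraction n (truncate_below (n / 2 ^ M) r)"
proof (cases "n / 2 ^ M \<le> real r")
  case True
  have "n * (\<Sum>i<M. of_bool (n / 2 ^ (i + 1) \<le> real r) / 2 ^ (i + 2)) \<le> min (real r) (n / 2)"
    using dyadic_sum_le_min[of n r M] by (simp add: sum_distrib_left)
  also have "\<dots> \<le> real (min r n)" by auto
  finally show ?thesis
    using True n by (simp add: covered_fraction_def truncate_below_def field_simps)
next
  case False
  have "n / 2 ^ (i + 1) > real r" if "i < M" for i
  proof -
    have "(2::real) ^ (i + 1) \<le> 2 ^ M" using that by (intro power_increasing) auto
    then have "n / 2 ^ M \<le> n / 2 ^ (i + 1)" by (intro divide_left_mono) auto
    then show ?thesis using False by simp
  qed
  then have "(\<Sum>i<M. of_bool (n / 2 ^ (i + 1) \<le> real r) / 2 ^ (i + 2)) = (0::real)"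
    by (intro sum.neutral) (auto simp: not_le)
  then show ?thesis using False by (simp add: covered_fraction_def truncate_below_def)
qed

lemma mean_covered_fraction_truncate_below_ge:
  assumes n: "0 < n"
  shows "(\<Sum>i<M. radius_tail R (n / 2 ^ (i + 1)) / 2 ^ (i + 2)) \<le>
         mean_covered_fraction (map_pmf (truncate_below (n / 2 ^ M)) R) n"
proof -
  have "(\<Sum>i<M. radius_tail R (n / 2 ^ (i + 1)) / 2 ^ (i + 2)) =
        measure_pmf.expectation R (\<lambda>r. \<Sum>i<M. of_bool (n / 2 ^ (i + 1) \<le> real r) / 2 ^ (i + 2))"
    by (simp add: Bochner_Integration.integral_sum expectation_of_bool_pmf radius_tail_def)
  also have "\<dots> \<le> measure_pmf.expectation R (\<lambda>r. covered_fraction n (truncate_below (n / 2 ^ M) r))"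
    by (intro integral_mono dyadic_sum_le_covered_fraction[OF n])
       (auto intro!: integrable_measure_pmf_bounded[where B = 1] simp: covered_fraction_bounds)
  finally show ?thesis by (simp add: mean_covered_fraction_def)
qed

lemma regularly_varying_sequentially:
  assumes "regularly_varying p U" "0 < t"
  shows "(\<lambda>n. U (real n * t) / U (real n)) \<longlonglongrightarrow> t powr p"
proof -
  have "((\<lambda>x. U (x * t) / U x) \<longlongrightarrow> t powr p) at_top"
    using assms unfolding regularly_varying_def by blast
  then show ?thesis by (rule filterlim_compose[OF _ filterlim_real_sequentially])
qed

lemma regularly_varying_neg1_ratio:
  assumes "regularly_varying (-1) U" "0 < c"
  shows "(\<lambda>n. U (real n / c) / U (real n)) \<longlonglongrightarrow> c"
  using regularly_varying_sequentially[OF assms(1), of "1 / c"] assms(2)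
  by (simp add: powr_minus_divide)

lemma eventually_radius_tail_pos:
  assumes "regularly_varying p (radius_tail R)"
  shows "eventually (\<lambda>n. 0 < radius_tail R (real n)) sequentially"
proof -
  have "eventually (\<lambda>n. 0 < radius_tail R (real n * 1) / radius_tail R (real n)) sequentially"
    using regularly_varying_sequentially[OF assms zero_less_one] by (rule order_tendstoD(1)) simp
  then show ?thesis
    by eventually_elim (auto simp: radius_tail_def zero_less_measure_iff)
qed

lemma cover_time_tail_dyadic_bound:
  fixes R :: "nat pmf"
  assumes n: "0 < n" and f: "0 < radius_tail R (real n)"
  defines "ratio \<equiv> \<lambda>c. radius_tail R (real n / c) / radius_tail R (real n)"
  shows "1 - cover_time_le R n (4 / radius_tail R (real n)) \<le>
    exp (- (4 * ratio (2 ^ M))) + 4 * ratio (2 ^ M) * exp (- (\<Sum>i<M. ratio (2 ^ (i + 1)) / 2 ^ i))"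
proof -
  define t where "t = 4 / radius_tail R (real n)"
  define Q where "Q = map_pmf (truncate_below (n / 2 ^ M)) R"
  have t: "0 < t" using f by (simp add: t_def)
  have tp: "t * nonempty_arc_prob Q = 4 * ratio (2 ^ M)"
    using n by (simp add: Q_def t_def ratio_def nonempty_arc_prob_truncate_below)
  have "(\<Sum>i<M. ratio (2 ^ (i + 1)) / 2 ^ i) = t * (\<Sum>i<M. radius_tail R (n / 2 ^ (i + 1)) / 2 ^ (i + 2))"
    by (simp add: t_def ratio_def sum_distrib_left field_simps)
  also have "\<dots> \<le> t * mean_covered_fraction Q n"
    using mean_covered_fraction_truncate_below_ge[OF n, of R M] t by (simp add: Q_def)
  finally have tq: "(\<Sum>i<M. ratio (2 ^ (i + 1)) / 2 ^ i) \<le> t * mean_covered_fraction Q n" .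
  have "0 \<le> ratio (2 ^ M)" by (simp add: ratio_def radius_tail_def)
  have "1 - cover_time_le R n t \<le>
      exp (- t * nonempty_arc_prob Q) + t * nonempty_arc_prob Q * exp (- t * mean_covered_fraction Q n)"
    unfolding Q_def by (rule cover_time_tail_le[OF n t truncate_below_le])
  also have "\<dots> = exp (- (4 * ratio (2 ^ M))) + 4 * ratio (2 ^ M) * exp (- (t * mean_covered_fraction Q n))"
    using tp by simp
  also have "\<dots> \<le> exp (- (4 * ratio (2 ^ M))) + 4 * ratio (2 ^ M) * exp (- (\<Sum>i<M. ratio (2 ^ (i + 1)) / 2 ^ i))"
    using tq \<open>0 \<le> ratio (2 ^ M)\<close> by (intro add_left_mono mult_left_mono) auto
  finally show ?thesis unfolding t_def .
qed

lemma cover_time_tail_dyadic_bound_tendsto: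
  assumes "regularly_varying (-1) (radius_tail R)"
  defines "ratio \<equiv> \<lambda>c n. radius_tail R (real n / c) / radius_tail R (real n)"
  shows "(\<lambda>n. exp (- (4 * ratio (2 ^ M) n)) + 4 * ratio (2 ^ M) n *
                exp (- (\<Sum>i<M. ratio (2 ^ (i + 1)) n / 2 ^ i)))
    \<longlonglongrightarrow> exp (- (4 * 2 ^ M)) + 4 * 2 ^ M * exp (- (2 * real M))"
proof -
  have ratio: "(\<lambda>n. ratio c n) \<longlonglongrightarrow> c" if "0 < c" for c
    unfolding ratio_def by (rule regularly_varying_neg1_ratio[OF assms(1) that])
  have "(\<lambda>n. \<Sum>i<M. ratio (2 ^ (i + 1)) n / 2 ^ i) \<longlonglongrightarrow> (\<Sum>i<M. 2 ^ (i + 1) / 2 ^ i)"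
    by (intro tendsto_sum tendsto_divide ratio tendsto_const) auto
  also have "(\<Sum>i<M. 2 ^ (i + 1) / 2 ^ i :: real) = 2 * real M" by simp
  finally have sum_limit: "(\<lambda>n. \<Sum>i<M. ratio (2 ^ (i + 1)) n / 2 ^ i) \<longlonglongrightarrow> 2 * real M" .
  show ?thesis
    by (intro tendsto_add tendsto_mult tendsto_exp tendsto_minus tendsto_const ratio sum_limit) auto
qed

lemma dyadic_bound_limit_tendsto_zero:
  "(\<lambda>M::nat. exp (- (4 * 2 ^ M)) + 4 * 2 ^ M * exp (- (2 * real M))) \<longlonglongrightarrow> (0::real)"
  by real_asymp

theorem mainTheorem9:
  fixes R :: "nat pmf"
  assumes "0 \<notin> set_pmf R"
    and "regularly_varying (-1) (radius_tail R)"
  shows "\<exists>a>0. ((\<lambda>n. if radius_tail R (real n) = 0 then 1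
                     else cover_time_le R n (a / radius_tail R (real n)))
                 \<longlonglongrightarrow> 1)"
proof -
  have "(\<lambda>n. if radius_tail R (real n) = 0 then 1 else cover_time_le R n (4 / radius_tail R (real n)))
        \<longlonglongrightarrow> 1"
  proof (rule tendstoI)
    fix \<epsilon> :: real assume "0 < \<epsilon>"
    then have "eventually (\<lambda>M. exp (- (4 * 2 ^ M)) + 4 * 2 ^ M * exp (- (2 * real M)) < \<epsilon>) sequentially"
      by (rule order_tendstoD(2)[OF dyadic_bound_limit_tendsto_zero])
    then obtain M where M: "exp (- (4 * 2 ^ M)) + 4 * 2 ^ M * exp (- (2 * real M)) < \<epsilon>"
      using eventually_happens'[OF sequentially_bot] by blast
    have "eventually (\<lambda>n. 0 < n) sequentially" by (rule eventually_gt_at_top)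
    moreover note eventually_radius_tail_pos[OF assms(2)]
    moreover note order_tendstoD(2)[OF cover_time_tail_dyadic_bound_tendsto[OF assms(2)] M]
    ultimately show "eventually (\<lambda>n. dist (if radius_tail R (real n) = 0 then 1
                       else cover_time_le R n (4 / radius_tail R (real n))) 1 < \<epsilon>) sequentially"
    proof eventually_elim
      case (elim n)
      have "cover_time_le R n (4 / radius_tail R (real n)) \<le> 1"
        by (simp add: cover_time_le_def)
      with elim cover_time_tail_dyadic_bound[of n R M] show ?case
        by (simp add: dist_real_def)
    qed
  qed
  then show ?thesis by (intro exI[of _ 4]) auto
qed

end
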